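(* Let $(A,B,s,t,\Delta)$ be a left multiplier bialgebroid with a left counit $\varepsilon$. Then the image $B_0:=\varepsilon(A)$ is an idempotent, essential two-sided ideal in $B$, and $s(B_0)A=A=t(B_0)A$.
   Context: All algebras are associative complex algebras, not necessarily unital. For an algebra $A$ with $A_A$ non-degenerate, $L(A)$ denotes right $A$-module endomorphisms of $A$ (containing $A$ via left multiplication) and $M(A)=\{T\in L(A):aT\in A\ \forall a\}$. A left multiplier bialgebroid is a tuple $(A,B,s,t,\Delta)$: (i) $A,B$ algebras, $A_A$ non-degenerate and idempotent ($AA=A$); (ii) $s\colon B\to M(A)$ homomorphism, $t\colon B\to M(A)$ anti-homomorphism with commuting images, $s,t$ injective, $s(B)A=A=t(B)A$; ${}_BA\otimes A^B$, the quotient of $A\otimes A$ by the span of $s(x)a\otimes b-a\otimes t(x)b$, is non-degenerate as a right module over $A\otimes1$ and $1\otimes A$; (iii) $\Delta$ is an algebra homomorphism into the algebra of endomorphisms $T$ of ${}_BA\otimes A^B$ for which $T(a\otimes1),T(1\otimes b)\in{}_BA\otimes A^B$ exist with $T(a\otimes b)=T(a\otimes1)(1\otimes b)=T(1\otimes b)(a\otimes1)$; (iv) $\Delta(s(x)t(y)as(x')t(y'))=(t(y)\otimes s(x))\Delta(a)(t(y')\otimes s(x'))$; (v) if $\Delta(b)(1\otimes c)=\sum p_i\otimes q_i$ and $\Delta(b)(a\otimes1)=\sum u_j\otimes v_j$ then $\sum\Delta(p_i)(a\otimes1)\otimes q_i=\sum u_j\otimes\Delta(v_j)(1\otimes c)$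 in $A^{\otimes3}$ modulo the span of $s(x)a\otimes b\otimes c-a\otimes t(x)b\otimes c$ and $a\otimes s(x)b\otimes c-a\otimes b\otimes t(x)c$. Canonical maps $T_\lambda(a\otimes b)=\Delta(b)(a\otimes 1)$, $T_\rho(a\otimes b)=\Delta(a)(1\otimes b)$. A left counit is a linear $\varepsilon\colon A\to B$ with $\varepsilon(s(x)a)=x\varepsilon(a)$, $\varepsilon(t(y)a)=\varepsilon(a)y$, $\sum t(\varepsilon(c_i))d_i=ab$ whenever $T_\rho(a\otimes b)=\sum c_i\otimes d_i$, and $\sum s(\varepsilon(d_i))c_i=ba$ whenever $T_\lambda(a\otimes b)=\sum c_i\otimes d_i$. A two-sided ideal $I$ of $B$ is essential if $xI=0$ or $Ix=0$ implies $x=0$; idempotent means $II=I$. *)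

theory Defs
  imports Complex_Main
begin

text \<open>An algebra is modelled as a type of class ring (associative, not necessarily
 unital) together with a complex scalar multiplication making it a complex vector
 space, compatible with the product.\<close>

definition cplx_alg :: "(complex \<Rightarrow> 'a::ring \<Rightarrow> 'a) \<Rightarrow> bool" where
  "cplx_alg sc \<longleftrightarrow> vector_space sc \<and>
     (\<forall>c x y. sc c (x * y) = sc c x * y \<and> sc c (x * y) = x * sc c y)"

definition right_nondeg :: "'a::ring itself \<Rightarrow> bool" where
  "right_nondeg _ \<longleftrightarrow> (\<forall>a::'a. (\<forall>b. a * b = 0) \<longrightarrow> a = 0)"

definition alg_idempotent :: "(complex \<Rightarrow> 'a::ring \<Rightarrow> 'a) \<Rightarrow> bool" where
  "alg_idempotent sc \<longleftrightarrow> module.span sc {a * b | a b. True} = UNIV"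

text \<open>Elements of L(A): right A-module endomorphisms of A; elements of M(A):
 those T in L(A) with aT in A for all a, i.e. for every a there is c with
 a (T b) = c b for all b.\<close>
definition in_LA :: "(complex \<Rightarrow> 'a::ring \<Rightarrow> 'a) \<Rightarrow> ('a \<Rightarrow> 'a) \<Rightarrow> bool" where
  "in_LA sc T \<longleftrightarrow> Vector_Spaces.linear sc sc T \<and> (\<forall>a b. T (a * b) = T a * b)"

definition in_MA :: "(complex \<Rightarrow> 'a::ring \<Rightarrow> 'a) \<Rightarrow> ('a \<Rightarrow> 'a) \<Rightarrow> bool" where
  "in_MA sc T \<longleftrightarrow> in_LA sc T \<and> (\<forall>a. \<exists>c. \<forall>b. a * T b = c * b)"

text \<open>Right multiplication a T of a in A by a multiplier T in M(A) (the unique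
 element c of A with c b = a (T b) for all b; unique by non-degeneracy).\<close>
definition rmul :: "'a::ring \<Rightarrow> ('a \<Rightarrow> 'a) \<Rightarrow> 'a" where
  "rmul a T = (THE c. \<forall>b. c * b = a * T b)"

text \<open>Elements of A \<otimes> A are represented by finite lists of pairs (a_i, b_i)
 standing for sum_i a_i \<otimes> b_i.  Two representatives define the same element of
 the quotient  _B A \<otimes> A^B  iff every balanced bilinear functional A \<times> A \<rightarrow> \<complex>
 takes the same value on them (universal property of the quotient together with the
 fact that vectors are separated by linear functionals).\<close>

definition balanced2 :: "(complex \<Rightarrow> 'a::ring \<Rightarrow> 'a) \<Rightarrow> ('b \<Rightarrow> 'a \<Rightarrow> 'a) \<Rightarrow> ('b \<Rightarrow> 'a \<Rightarrow> 'a)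
    \<Rightarrow> ('a \<Rightarrow> 'a \<Rightarrow> complex) \<Rightarrow> bool" where
  "balanced2 sc s t \<phi> \<longleftrightarrow>
     (\<forall>a. Vector_Spaces.linear sc (*) (\<phi> a)) \<and>
     (\<forall>b. Vector_Spaces.linear sc (*) (\<lambda>a. \<phi> a b)) \<and>
     (\<forall>x a b. \<phi> (s x a) b = \<phi> a (t x b))"

definition teq :: "(complex \<Rightarrow> 'a::ring \<Rightarrow> 'a) \<Rightarrow> ('b \<Rightarrow> 'a \<Rightarrow> 'a) \<Rightarrow> ('b \<Rightarrow> 'a \<Rightarrow> 'a)
    \<Rightarrow> ('a \<times> 'a) list \<Rightarrow> ('a \<times> 'a) list \<Rightarrow> bool" where
  "teq sc s t xs ys \<longleftrightarrow> (\<forall>\<phi>. balanced2 sc s t \<phi> \<longrightarrow>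
     sum_list (map (\<lambda>(a, b). \<phi> a b) xs) = sum_list (map (\<lambda>(a, b). \<phi> a b) ys))"

text \<open>Triple tensors modulo the span of s(x)a\<otimes>b\<otimes>c - a\<otimes>t(x)b\<otimes>c and
 a\<otimes>s(x)b\<otimes>c - a\<otimes>b\<otimes>t(x)c.\<close>
definition balanced3 :: "(complex \<Rightarrow> 'a::ring \<Rightarrow> 'a) \<Rightarrow> ('b \<Rightarrow> 'a \<Rightarrow> 'a) \<Rightarrow> ('b \<Rightarrow> 'a \<Rightarrow> 'a)
    \<Rightarrow> ('a \<Rightarrow> 'a \<Rightarrow> 'a \<Rightarrow> complex) \<Rightarrow> bool" where
  "balanced3 sc s t \<phi> \<longleftrightarrow>
     (\<forall>b c. Vector_Spaces.linear sc (*) (\<lambda>a. \<phi> a b c)) \<and>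
     (\<forall>a c. Vector_Spaces.linear sc (*) (\<lambda>b. \<phi> a b c)) \<and>
     (\<forall>a b. Vector_Spaces.linear sc (*) (\<lambda>c. \<phi> a b c)) \<and>
     (\<forall>x a b c. \<phi> (s x a) b c = \<phi> a (t x b) c) \<and>
     (\<forall>x a b c. \<phi> a (s x b) c = \<phi> a b (t x c))"

definition teq3 :: "(complex \<Rightarrow> 'a::ring \<Rightarrow> 'a) \<Rightarrow> ('b \<Rightarrow> 'a \<Rightarrow> 'a) \<Rightarrow> ('b \<Rightarrow> 'a \<Rightarrow> 'a)
    \<Rightarrow> ('a \<times> 'a \<times> 'a) list \<Rightarrow> ('a \<times> 'a \<times> 'a) list \<Rightarrow> bool" where
  "teq3 sc s t xs ys \<longleftrightarrow> (\<forall>\<phi>. balanced3 sc s t \<phi> \<longrightarrow>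
     sum_list (map (\<lambda>(a, b, c). \<phi> a b c) xs) = sum_list (map (\<lambda>(a, b, c). \<phi> a b c) ys))"

text \<open>Operations on representatives: scalar multiple, right multiplication by
 a \<otimes> 1 and by 1 \<otimes> b.\<close>
definition tscale :: "(complex \<Rightarrow> 'a \<Rightarrow> 'a) \<Rightarrow> complex \<Rightarrow> ('a \<times> 'a) list \<Rightarrow> ('a \<times> 'a) list" where
  "tscale sc c xs = map (\<lambda>(p, q). (sc c p, q)) xs"

definition rmul_left :: "('a::ring \<times> 'a) list \<Rightarrow> 'a \<Rightarrow> ('a \<times> 'a) list" where
  "rmul_left xs a = map (\<lambda>(p, q). (p * a, q)) xs"

definition rmul_right :: "('a::ring \<times> 'a) list \<Rightarrow> 'a \<Rightarrow> ('a \<times> 'a) list" where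
  "rmul_right xs b = map (\<lambda>(p, q). (p, q * b)) xs"

text \<open>isDL D b a q: q represents \<Delta>(b)(a\<otimes>1), i.e. \<Delta>(b)(a\<otimes>y) = q(1\<otimes>y) for all y.
 isDR D b c q: q represents \<Delta>(b)(1\<otimes>c), i.e. \<Delta>(b)(x\<otimes>c) = q(x\<otimes>1) for all x.\<close>
definition isDL :: "(complex \<Rightarrow> 'a::ring \<Rightarrow> 'a) \<Rightarrow> ('b \<Rightarrow> 'a \<Rightarrow> 'a) \<Rightarrow> ('b \<Rightarrow> 'a \<Rightarrow> 'a)
    \<Rightarrow> ('a \<Rightarrow> ('a \<times> 'a) list \<Rightarrow> ('a \<times> 'a) list) \<Rightarrow> 'a \<Rightarrow> 'a \<Rightarrow> ('a \<times> 'a) list \<Rightarrow> bool" where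
  "isDL sc s t D b a q \<longleftrightarrow> (\<forall>y. teq sc s t (D b [(a, y)]) (rmul_right q y))"

definition isDR :: "(complex \<Rightarrow> 'a::ring \<Rightarrow> 'a) \<Rightarrow> ('b \<Rightarrow> 'a \<Rightarrow> 'a) \<Rightarrow> ('b \<Rightarrow> 'a \<Rightarrow> 'a)
    \<Rightarrow> ('a \<Rightarrow> ('a \<times> 'a) list \<Rightarrow> ('a \<times> 'a) list) \<Rightarrow> 'a \<Rightarrow> 'a \<Rightarrow> ('a \<times> 'a) list \<Rightarrow> bool" where
  "isDR sc s t D b c q \<longleftrightarrow> (\<forall>x. teq sc s t (D b [(x, c)]) (rmul_left q x))"

text \<open>\<Delta> is given by D :: A \<Rightarrow> (representatives \<Rightarrow> representatives): D a acts on
 representatives of elements of _B A \<otimes> A^B and must respect the equivalence teq.\<close>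

definition left_multiplier_bialgebroid ::
  "(complex \<Rightarrow> 'a::ring \<Rightarrow> 'a) \<Rightarrow> (complex \<Rightarrow> 'b::ring \<Rightarrow> 'b) \<Rightarrow> ('b \<Rightarrow> 'a \<Rightarrow> 'a) \<Rightarrow> ('b \<Rightarrow> 'a \<Rightarrow> 'a)
    \<Rightarrow> ('a \<Rightarrow> ('a \<times> 'a) list \<Rightarrow> ('a \<times> 'a) list) \<Rightarrow> bool" where
  "left_multiplier_bialgebroid scA scB s t D \<longleftrightarrow>
   \<comment> \<open>(i)\<close>
   cplx_alg scA \<and> cplx_alg scB \<and> right_nondeg TYPE('a) \<and> alg_idempotent scA \<and>
   \<comment> \<open>(ii) s homomorphism, t anti-homomorphism into M(A), commuting images, injective\<close>
   (\<forall>x. in_MA scA (s x)) \<and> (\<forall>x. in_MA scA (t x)) \<and>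
   (\<forall>x y a. s (x + y) a = s x a + s y a) \<and> (\<forall>c x a. s (scB c x) a = scA c (s x a)) \<and>
   (\<forall>x y a. s (x * y) a = s x (s y a)) \<and>
   (\<forall>x y a. t (x + y) a = t x a + t y a) \<and> (\<forall>c x a. t (scB c x) a = scA c (t x a)) \<and>
   (\<forall>x y a. t (x * y) a = t y (t x a)) \<and>
   (\<forall>x y a. s x (t y a) = t y (s x a)) \<and>
   inj s \<and> inj t \<and>
   module.span scA {s x a | x a. True} = UNIV \<and>
   module.span scA {t x a | x a. True} = UNIV \<and>
   (\<forall>xs. (\<forall>a. teq scA s t (rmul_left xs a) []) \<longrightarrow> teq scA s t xs []) \<and>
   (\<forall>xs. (\<forall>b. teq scA s t (rmul_right xs b) []) \<longrightarrow> teq scA s t xs []) \<and>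
   \<comment> \<open>(iii) each \<Delta>(a) is an endomorphism of _B A \<otimes> A^B (well defined and linear)\<close>
   (\<forall>a xs ys. teq scA s t xs ys \<longrightarrow> teq scA s t (D a xs) (D a ys)) \<and>
   (\<forall>a xs ys. teq scA s t (D a (xs @ ys)) (D a xs @ D a ys)) \<and>
   (\<forall>a c xs. teq scA s t (D a (tscale scA c xs)) (tscale scA c (D a (xs)))) \<and>
   \<comment> \<open>... with \<Delta>(a)(b\<otimes>1) and \<Delta>(a)(1\<otimes>c) existing in _B A \<otimes> A^B\<close>
   (\<forall>a b. \<exists>q. isDL scA s t D a b q) \<and> (\<forall>a c. \<exists>q. isDR scA s t D a c q) \<and>
   \<comment> \<open>... and \<Delta> is an algebra homomorphism\<close>
   (\<forall>a b xs. teq scA s t (D (a + b) xs) (D a xs @ D b xs)) \<and>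
   (\<forall>c a xs. teq scA s t (D (scA c a) xs) (tscale scA c (D a xs))) \<and>
   (\<forall>a b xs. teq scA s t (D (a * b) xs) (D a (D b xs))) \<and>
   \<comment> \<open>(iv)\<close>
   (\<forall>x y x' y' a xs.
      teq scA s t (D (s x (t y (rmul (rmul a (s x')) (t y')))) xs)
        (map (\<lambda>(p, q). (t y p, s x q)) (D a (map (\<lambda>(p, q). (t y' p, s x' q)) xs)))) \<and>
   \<comment> \<open>(v) coassociativity\<close>
   (\<forall>a b c ps us P V.
      isDR scA s t D b c ps \<longrightarrow> isDL scA s t D b a us \<longrightarrow>
      (\<forall>i < length ps. isDL scA s t D (fst (ps ! i)) a (P i)) \<longrightarrow>
      (\<forall>j < length us. isDR scA s t D (snd (us ! j)) c (V j)) \<longrightarrow>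
      teq3 scA s t
        (concat (map (\<lambda>i. map (\<lambda>(x, y). (x, y, snd (ps ! i))) (P i)) [0..<length ps]))
        (concat (map (\<lambda>j. map (\<lambda>(y, z). (fst (us ! j), y, z)) (V j)) [0..<length us])))"

text \<open>Left counit.  T_rho(a\<otimes>b) = \<Delta>(a)(1\<otimes>b), T_lambda(a\<otimes>b) = \<Delta>(b)(a\<otimes>1).\<close>
definition left_counit ::
  "(complex \<Rightarrow> 'a::ring \<Rightarrow> 'a) \<Rightarrow> (complex \<Rightarrow> 'b::ring \<Rightarrow> 'b) \<Rightarrow> ('b \<Rightarrow> 'a \<Rightarrow> 'a) \<Rightarrow> ('b \<Rightarrow> 'a \<Rightarrow> 'a)
    \<Rightarrow> ('a \<Rightarrow> ('a \<times> 'a) list \<Rightarrow> ('a \<times> 'a) list) \<Rightarrow> ('a \<Rightarrow> 'b) \<Rightarrow> bool" where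
  "left_counit scA scB s t D \<epsilon> \<longleftrightarrow>
   Vector_Spaces.linear scA scB \<epsilon> \<and>
   (\<forall>x a. \<epsilon> (s x a) = x * \<epsilon> a) \<and>
   (\<forall>y a. \<epsilon> (t y a) = \<epsilon> a * y) \<and>
   (\<forall>a b cs. isDR scA s t D a b cs \<longrightarrow> sum_list (map (\<lambda>(c, d). t (\<epsilon> c) d) cs) = a * b) \<and>
   (\<forall>a b cs. isDL scA s t D b a cs \<longrightarrow> sum_list (map (\<lambda>(c, d). s (\<epsilon> d) c) cs) = b * a)"

definition two_sided_ideal :: "(complex \<Rightarrow> 'b::ring \<Rightarrow> 'b) \<Rightarrow> 'b set \<Rightarrow> bool" where
  "two_sided_ideal sc I \<longleftrightarrow> module.subspace sc I \<and> (\<forall>x\<in>I. \<forall>y. y * x \<in> I \<and> x * y \<in> I)"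

definition idempotent_ideal :: "(complex \<Rightarrow> 'b::ring \<Rightarrow> 'b) \<Rightarrow> 'b set \<Rightarrow> bool" where
  "idempotent_ideal sc I \<longleftrightarrow> module.span sc {x * y | x y. x \<in> I \<and> y \<in> I} = I"

definition essential_ideal :: "'b::ring set \<Rightarrow> bool" where
  "essential_ideal I \<longleftrightarrow> (\<forall>x. ((\<forall>i\<in>I. x * i = 0) \<or> (\<forall>i\<in>I. i * x = 0)) \<longrightarrow> x = 0)"

end

theory Submission
  imports Defs
begin

text \<open>The counit axiom for T_rho writes each product ab as \<Sum> t(\<epsilon> c_i) d_i, the one
 for T_lambda writes ab as \<Sum> s(\<epsilon> d_i) c_i.  Since the products span A, so do t(B_0)A and
 s(B_0)A.  Applying \<epsilon> to the first decomposition, with \<epsilon>(t(\<epsilon> c) d) = \<epsilon>(d) \<epsilon>(c), shows that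
 B_0 is idempotent.  If B_0 x = 0, then t(x) t(\<epsilon> c) d = t(\<epsilon>(c) x) d = 0, so t(x) vanishes on A
 and x = 0 by injectivity of t; x B_0 = 0 is handled symmetrically with s.\<close>

lemma (in module) span_sum_list:
  "(\<And>x. x \<in> set xs \<Longrightarrow> g x \<in> span S) \<Longrightarrow> sum_list (map g xs) \<in> span S"
  by (induction xs) (auto intro: span_zero span_add)

lemma (in module) span_eq_UNIV_if_subset_span:
  assumes "span T = UNIV" and "T \<subseteq> span S"
  shows "span S = UNIV"
  using span_mono[OF assms(2)] assms(1) unfolding span_span by blast

locale left_counital_bialgebroid =
  fixes scA :: "complex \<Rightarrow> 'a::ring \<Rightarrow> 'a" and scB :: "complex \<Rightarrow> 'b::ring \<Rightarrow> 'b"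
    and s t :: "'b \<Rightarrow> 'a \<Rightarrow> 'a"
    and D :: "'a \<Rightarrow> ('a \<times> 'a) list \<Rightarrow> ('a \<times> 'a) list"
    and \<epsilon> :: "'a \<Rightarrow> 'b"
  assumes bialgebroid: "left_multiplier_bialgebroid scA scB s t D"
    and counit: "left_counit scA scB s t D \<epsilon>"
begin

sublocale A: module scA
  using bialgebroid unfolding left_multiplier_bialgebroid_def cplx_alg_def module_iff_vector_space
  by (elim conjE)

sublocale B: module scB
  using bialgebroid unfolding left_multiplier_bialgebroid_def cplx_alg_def module_iff_vector_space
  by (elim conjE)

sublocale eps: module_hom scA scB \<epsilon>
  using counit unfolding left_counit_def module_hom_iff_linear by (elim conjE)

lemma s_module_hom: "module_hom scA scA (s x)"
  using bialgebroid unfolding left_multiplier_bialgebroid_def in_MA_def in_LA_def module_hom_iff_linear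
  by (elim conjE) blast

lemma t_module_hom: "module_hom scA scA (t x)"
  using bialgebroid unfolding left_multiplier_bialgebroid_def in_MA_def in_LA_def module_hom_iff_linear
  by (elim conjE) blast

lemma span_products: "A.span {a * b | a b. True} = UNIV"
  using bialgebroid unfolding left_multiplier_bialgebroid_def alg_idempotent_def by (elim conjE)

lemma s_mult: "s (x * y) a = s x (s y a)"
  using bialgebroid unfolding left_multiplier_bialgebroid_def by (elim conjE) blast

lemma t_mult: "t (x * y) a = t y (t x a)"
  using bialgebroid unfolding left_multiplier_bialgebroid_def by (elim conjE) blast

lemma s_zero: "s 0 a = 0"
proof -
  have "s (0 + 0) a = s 0 a + s 0 a"
    using bialgebroid unfolding left_multiplier_bialgebroid_def by (elim conjE) blast
  then show ?thesis by simp
qed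

lemma t_zero: "t 0 a = 0"
proof -
  have "t (0 + 0) a = t 0 a + t 0 a"
    using bialgebroid unfolding left_multiplier_bialgebroid_def by (elim conjE) blast
  then show ?thesis by simp
qed

lemma eq_0_if_s_eq_0:
  assumes "\<And>a. s x a = 0" shows "x = 0"
proof -
  have "s x = s 0" using assms s_zero by auto
  moreover have "inj s"
    using bialgebroid unfolding left_multiplier_bialgebroid_def by (elim conjE)
  ultimately show ?thesis by (auto dest: injD)
qed

lemma eq_0_if_t_eq_0:
  assumes "\<And>a. t x a = 0" shows "x = 0"
proof -
  have "t x = t 0" using assms t_zero by auto
  moreover have "inj t"
    using bialgebroid unfolding left_multiplier_bialgebroid_def by (elim conjE)
  ultimately show ?thesis by (auto dest: injD)
qed

lemma counit_s: "\<epsilon> (s x a) = x * \<epsilon> a"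
  using counit unfolding left_counit_def by (elim conjE) blast

lemma counit_t: "\<epsilon> (t y a) = \<epsilon> a * y"
  using counit unfolding left_counit_def by (elim conjE) blast

lemma ex_isDL: "\<forall>a b. \<exists>q. isDL scA s t D a b q"
  using bialgebroid unfolding left_multiplier_bialgebroid_def by (elim conjE) assumption

lemma ex_isDR: "\<forall>a b. \<exists>q. isDR scA s t D a b q"
  using bialgebroid unfolding left_multiplier_bialgebroid_def by (elim conjE) assumption

lemma product_in_span_s_counit: "a * b \<in> A.span {s x c | x c. x \<in> range \<epsilon>}"
proof -
  obtain cs where "isDL scA s t D a b cs"
    using ex_isDL by blast
  then have "sum_list (map (\<lambda>(c, d). s (\<epsilon> d) c) cs) = a * b"
    using counit unfolding left_counit_def by (elim conjE) blast
  moreover have "sum_list (map (\<lambda>(c, d). s (\<epsilon> d) c) cs) \<in> A.span {s x c | x c. x \<in> range \<epsilon>}"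
    by (rule A.span_sum_list) (auto intro: A.span_base)
  ultimately show ?thesis by simp
qed

lemma product_in_span_t_counit: "a * b \<in> A.span {t x d | x d. x \<in> range \<epsilon>}"
proof -
  obtain cs where "isDR scA s t D a b cs"
    using ex_isDR by blast
  then have "sum_list (map (\<lambda>(c, d). t (\<epsilon> c) d) cs) = a * b"
    using counit unfolding left_counit_def by (elim conjE) blast
  moreover have "sum_list (map (\<lambda>(c, d). t (\<epsilon> c) d) cs) \<in> A.span {t x d | x d. x \<in> range \<epsilon>}"
    by (rule A.span_sum_list) (auto intro: A.span_base)
  ultimately show ?thesis by simp
qed

lemma span_s_counit: "A.span {s x a | x a. x \<in> range \<epsilon>} = UNIV"
  using product_in_span_s_counit by (intro A.span_eq_UNIV_if_subset_span[OF span_products]) auto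

lemma span_t_counit: "A.span {t x a | x a. x \<in> range \<epsilon>} = UNIV"
  using product_in_span_t_counit by (intro A.span_eq_UNIV_if_subset_span[OF span_products]) auto

lemma two_sided_ideal_range_counit: "two_sided_ideal scB (range \<epsilon>)"
  using eps.subspace_image[OF A.subspace_UNIV]
  by (auto simp: two_sided_ideal_def simp flip: counit_s counit_t)

lemma idempotent_ideal_range_counit: "idempotent_ideal scB (range \<epsilon>)"
proof -
  let ?P = "{x * y | x y. x \<in> range \<epsilon> \<and> y \<in> range \<epsilon>}"
  have "range \<epsilon> = \<epsilon> ` A.span {t x a | x a. x \<in> range \<epsilon>}"
    unfolding span_t_counit by simp
  also have "\<dots> = B.span (\<epsilon> ` {t x a | x a. x \<in> range \<epsilon>})"
    by (simp add: eps.span_image)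
  also have "\<dots> \<subseteq> B.span ?P"
    by (rule B.span_mono) (fastforce simp: counit_t)
  finally have "range \<epsilon> \<subseteq> B.span ?P" .
  moreover have "B.span ?P \<subseteq> range \<epsilon>"
    using two_sided_ideal_range_counit
    by (intro B.span_minimal) (auto simp: two_sided_ideal_def)
  ultimately show ?thesis
    unfolding idempotent_ideal_def by blast
qed

lemma essential_ideal_range_counit: "essential_ideal (range \<epsilon>)"
  unfolding essential_ideal_def
proof (intro allI impI)
  fix x
  assume "(\<forall>i\<in>range \<epsilon>. x * i = 0) \<or> (\<forall>i\<in>range \<epsilon>. i * x = 0)"
  then show "x = 0"
  proof
    assume "\<forall>i\<in>range \<epsilon>. x * i = 0"
    then have vanish: "s x (s y c) = 0" if "y \<in> range \<epsilon>" for y c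
      using that by (auto simp flip: s_mult simp: s_zero)
    have "s x a = 0" for a
      by (rule module_hom.eq_0_on_span[OF s_module_hom, where b = "{s y c | y c. y \<in> range \<epsilon>}"])
        (use vanish span_s_counit in auto)
    then show "x = 0" by (rule eq_0_if_s_eq_0)
  next
    assume "\<forall>i\<in>range \<epsilon>. i * x = 0"
    then have vanish: "t x (t y c) = 0" if "y \<in> range \<epsilon>" for y c
      using that by (auto simp flip: t_mult simp: t_zero)
    have "t x a = 0" for a
      by (rule module_hom.eq_0_on_span[OF t_module_hom, where b = "{t y c | y c. y \<in> range \<epsilon>}"])
        (use vanish span_t_counit in auto)
    then show "x = 0" by (rule eq_0_if_t_eq_0)
  qed
qed

end

theorem lemma3p6:
  fixes scA :: "complex \<Rightarrow> 'a::ring \<Rightarrow> 'a" and scB :: "complex \<Rightarrow> 'b::ring \<Rightarrow> 'b"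
    and s t :: "'b \<Rightarrow> 'a \<Rightarrow> 'a"
    and D :: "'a \<Rightarrow> ('a \<times> 'a) list \<Rightarrow> ('a \<times> 'a) list"
    and \<epsilon> :: "'a \<Rightarrow> 'b"
  assumes "left_multiplier_bialgebroid scA scB s t D"
    and "left_counit scA scB s t D \<epsilon>"
  shows "two_sided_ideal scB (range \<epsilon>) \<and> idempotent_ideal scB (range \<epsilon>) \<and>
         essential_ideal (range \<epsilon>) \<and>
         module.span scA {s x a | x a. x \<in> range \<epsilon>} = UNIV \<and>
         module.span scA {t x a | x a. x \<in> range \<epsilon>} = UNIV"
proof -
  interpret left_counital_bialgebroid scA scB s t D \<epsilon>
    using assms by unfold_locales
  show ?thesis
    by (intro conjI two_sided_ideal_range_counit idempotent_ideal_range_counit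
        essential_ideal_range_counit span_s_counit span_t_counit)
qed

end
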